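(* For every sequence $f=(f_m)_{m\ge1}$ and every sequence of test functions $\varphi=(\varphi_m)_{m\ge1}$ (with sufficient smoothness and decay), the weak form defining the BME operator is equivalent to $$\sum_{m\ge1}\int_{\mathbb{R}^n}Q_m(f)\varphi_m\,dv=-\frac14\sum_{m,m_1\ge1}\sum_{m'=1}^{m+m_1-1}(mm_1)^{n/2}\int_{\{(v,v_1,\Omega):(v-v_1)\cdot\Omega\le0\}}B_{m,m_1}(v,v_1,\Omega)\big(\varphi_{m'}(v')+\varphi_{m'_1}(v'_1)-\varphi_m(v)-\varphi_{m_1}(v_1)\big)\Big[\frac{A_{m',m'_1;m}}{(m'm'_1)^{n/2}}f_{m'}(v')f_{m'_1}(v'_1)-\frac{A_{m,m_1;m'}}{(mm_1)^{n/2}}f_m(v)f_{m_1}(v_1)\Big]dv\,dv_1\,d\Omega,$$ where $m'_1=m+m_1-m'$ and $v',v'_1$ are given by the collision rule.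
   Context: Let $n\ge1$ be an integer. Particle masses are positive integers. Given masses $m,m_1\ge1$, an integer $m'\in\{1,\dots,m+m_1-1\}$, $m'_1:=m+m_1-m'$, velocities $v,v_1\in\mathbb{R}^n$ and $\Omega\in\mathbb{S}^{n-1}$ with $\Omega\cdot(v-v_1)\le0$, the collision rule gives $v'=\frac{mv+m_1v_1}{m+m_1}+\frac{(mm_1)^{1/2}}{m+m_1}\big(\frac{m'_1}{m'}\big)^{1/2}\big[v-v_1-2((v-v_1)\cdot\Omega)\Omega\big]$, $v'_1=\frac{mv+m_1v_1}{m+m_1}-\frac{(mm_1)^{1/2}}{m+m_1}\big(\frac{m'}{m'_1}\big)^{1/2}\big[v-v_1-2((v-v_1)\cdot\Omega)\Omega\big]$. Let $A_{m,m_1;m'}\ge0$ satisfy $A_{m,m_1;m'}=A_{m_1,m;m'}=A_{m,m_1;m+m_1-m'}$, and let $\mathbf B\ge0$ be a function on $[0,\infty)\times[-1,1]$; write $B_{m,m_1}(v,v_1,\Omega):=\mathbf B\big(\frac{mm_1}{m+m_1}|v-v_1|^2,\ \Omega\cdot\frac{v-v_1}{|v-v_1|}\big)$. The BME operator $Q(f)=(Q_m(f))_{m\ge1}$ is defined in weak form by: for every test sequence $\varphi$, $$\sum_{m\ge1}\int_{\mathbb{R}^n}Q_m(f)\varphi_m\,dv=\frac12\sum_{m,m_1\ge1}\sum_{m'=1}^{m+m_1-1}A_{m,m_1;m'}\int_{\{(v-v_1)\cdot\Omega\le0\}}B_{m,m_1}(v,v_1,\Omega)\big(\varphi_{m'}(v')+\varphi_{m'_1}(v'_1)-\varphi_m(v)-\varphi_{m_1}(v_1)\big)f_m(v)f_{m_1}(v_1)\,dv\,dv_1\,d\Omega.$$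 *)

theory Defs
  imports "HOL-Analysis.Analysis"
begin

text \<open>Surface (cone) measure on the unit sphere S^{n-1} of a Euclidean space:
  sigma(A) = n * Lebesgue measure of the cone {r x | 0 < r <= 1, x in A}.\<close>
definition sphere_measure :: "('a::euclidean_space) measure" where
  "sphere_measure =
     measure_of (sphere 0 1) (sets (restrict_space borel (sphere 0 1)))
       (\<lambda>A. ennreal (real DIM('a)) *
              emeasure lborel {r *\<^sub>R x | r x. 0 < r \<and> r \<le> 1 \<and> x \<in> A})"

definition post_v :: "nat \<Rightarrow> nat \<Rightarrow> nat \<Rightarrow> 'a::real_inner \<Rightarrow> 'a \<Rightarrow> 'a \<Rightarrow> 'a" where
  "post_v m m1 m' v v1 \<omega> =
     (1 / real (m + m1)) *\<^sub>R (real m *\<^sub>R v + real m1 *\<^sub>R v1)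
     + (sqrt (real m * real m1) / real (m + m1) * sqrt (real (m + m1 - m') / real m'))
       *\<^sub>R (v - v1 - (2 * ((v - v1) \<bullet> \<omega>)) *\<^sub>R \<omega>)"

definition post_v1 :: "nat \<Rightarrow> nat \<Rightarrow> nat \<Rightarrow> 'a::real_inner \<Rightarrow> 'a \<Rightarrow> 'a \<Rightarrow> 'a" where
  "post_v1 m m1 m' v v1 \<omega> =
     (1 / real (m + m1)) *\<^sub>R (real m *\<^sub>R v + real m1 *\<^sub>R v1)
     - (sqrt (real m * real m1) / real (m + m1) * sqrt (real m' / real (m + m1 - m')))
       *\<^sub>R (v - v1 - (2 * ((v - v1) \<bullet> \<omega>)) *\<^sub>R \<omega>)"

definition Bker :: "(real \<Rightarrow> real \<Rightarrow> real) \<Rightarrow> nat \<Rightarrow> nat \<Rightarrow> 'a::real_inner \<Rightarrow> 'a \<Rightarrow> 'a \<Rightarrow> real" where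
  "Bker B m m1 v v1 \<omega> =
     B (real m * real m1 / real (m + m1) * (norm (v - v1))\<^sup>2) (\<omega> \<bullet> ((v - v1) /\<^sub>R norm (v - v1)))"

definition coll_space :: "(('a::euclidean_space \<times> 'a) \<times> 'a) measure" where
  "coll_space = (lborel \<Otimes>\<^sub>M lborel) \<Otimes>\<^sub>M sphere_measure"

definition coll_dom :: "(('a::euclidean_space \<times> 'a) \<times> 'a) set" where
  "coll_dom = {((v, v1), \<omega>). (v - v1) \<bullet> \<omega> \<le> 0}"

definition dphi :: "(nat \<Rightarrow> 'a::real_inner \<Rightarrow> real) \<Rightarrow> nat \<Rightarrow> nat \<Rightarrow> nat \<Rightarrow> 'a \<Rightarrow> 'a \<Rightarrow> 'a \<Rightarrow> real" where
  "dphi \<phi> m m1 m' v v1 \<omega> =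
     \<phi> m' (post_v m m1 m' v v1 \<omega>) + \<phi> (m + m1 - m') (post_v1 m m1 m' v v1 \<omega>)
     - \<phi> m v - \<phi> m1 v1"

definition triples :: "(nat \<times> nat \<times> nat) set" where
  "triples = {(m, m1, m'). 1 \<le> m \<and> 1 \<le> m1 \<and> 1 \<le> m' \<and> m' < m + m1}"

definition weak_form ::
  "(nat \<Rightarrow> nat \<Rightarrow> nat \<Rightarrow> real) \<Rightarrow> (real \<Rightarrow> real \<Rightarrow> real) \<Rightarrow>
   (nat \<Rightarrow> 'a::euclidean_space \<Rightarrow> real) \<Rightarrow> (nat \<Rightarrow> 'a \<Rightarrow> real) \<Rightarrow> real" where
  "weak_form A B f \<phi> =
     1/2 * (\<Sum>\<^sub>\<infinity>(m, m1)\<in>{1..} \<times> {1..}. \<Sum>m' = 1..m + m1 - 1.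
        A m m1 m' *
        (LINT x : coll_dom | coll_space.
           (case x of ((v, v1), \<omega>) \<Rightarrow>
              Bker B m m1 v v1 \<omega> * dphi \<phi> m m1 m' v v1 \<omega> * f m v * f m1 v1)))"

definition sym_form ::
  "(nat \<Rightarrow> nat \<Rightarrow> nat \<Rightarrow> real) \<Rightarrow> (real \<Rightarrow> real \<Rightarrow> real) \<Rightarrow>
   (nat \<Rightarrow> 'a::euclidean_space \<Rightarrow> real) \<Rightarrow> (nat \<Rightarrow> 'a \<Rightarrow> real) \<Rightarrow> real" where
  "sym_form A B f \<phi> =
     - 1/4 * (\<Sum>\<^sub>\<infinity>(m, m1)\<in>{1..} \<times> {1..}. \<Sum>m' = 1..m + m1 - 1.
        (real m * real m1) powr (real DIM('a) / 2) *
        (LINT x : coll_dom | coll_space.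
           (case x of ((v, v1), \<omega>) \<Rightarrow>
              Bker B m m1 v v1 \<omega> * dphi \<phi> m m1 m' v v1 \<omega> *
              (A m' (m + m1 - m') m / (real m' * real (m + m1 - m')) powr (real DIM('a) / 2)
                 * f m' (post_v m m1 m' v v1 \<omega>) * f (m + m1 - m') (post_v1 m m1 m' v v1 \<omega>)
               - A m m1 m' / (real m * real m1) powr (real DIM('a) / 2) * f m v * f m1 v1))))"

end

theory Submission
  imports Defs
begin

text \<open>For fixed masses, the map \<open>(v, v\<^sub>1, \<Omega>) \<mapsto> (v', v'\<^sub>1, -\<Omega>)\<close> turns the collision
  \<open>(m, m\<^sub>1 \<rightarrow> m', m'\<^sub>1)\<close> into the reverse collision \<open>(m', m'\<^sub>1 \<rightarrow> m, m\<^sub>1)\<close>: applied to the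
  post-collisional data it returns \<open>(v, v\<^sub>1)\<close>, and it preserves momentum, the collision domain
  and the kernel, while the test-function difference changes sign. For fixed \<open>\<Omega>\<close> the map is
  affine in \<open>(v, v\<^sub>1)\<close>: it keeps the centre of mass velocity, reflects the relative velocity and
  scales it by \<open>(m m\<^sub>1 / m' m'\<^sub>1)\<^sup>1\<^sup>/\<^sup>2\<close>. Writing it as a product of shears, a reflection and a
  dilation shows that it multiplies Lebesgue measure by \<open>(m' m'\<^sub>1 / m m\<^sub>1)\<^sup>n\<^sup>/\<^sup>2\<close>, and the
  sphere measure is invariant under \<open>\<Omega> \<mapsto> -\<Omega>\<close>. Hence the gain integral of \<open>(m, m\<^sub>1, m')\<close> is
  minus that factor times the weak-form integral of \<open>(m', m'\<^sub>1, m)\<close>, and reindexing the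
  absolutely summable sum over triples by \<open>(m, m\<^sub>1, m') \<mapsto> (m', m'\<^sub>1, m)\<close> turns the
  symmetrised form into the weak form.\<close>

section \<open>The sphere measure\<close>

lemma sets_sphere_measure:
  "sets (sphere_measure :: 'a::euclidean_space measure) = sets (restrict_space borel (sphere 0 1))"
proof -
  have "sets (restrict_space borel (sphere (0::'a) 1)) \<subseteq> Pow (sphere 0 1)"
    using sets.sets_into_space by (fastforce simp: space_restrict_space)
  then show ?thesis
    unfolding sphere_measure_def
    by (subst sets_measure_of)
      (auto simp: sets.sigma_sets_eq[of "restrict_space borel (sphere 0 1)",
                    simplified space_restrict_space, simplified])
qed

lemma space_sphere_measure: "space (sphere_measure :: 'a::euclidean_space measure) = sphere 0 1"
  unfolding sphere_measure_def by (simp add: space_measure_of_conv)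

lemma measurable_uminus_sphere_measure:
  "(uminus :: 'a::euclidean_space \<Rightarrow> 'a) \<in> sphere_measure \<rightarrow>\<^sub>M sphere_measure"
  unfolding measurable_cong_sets[OF sets_sphere_measure sets_sphere_measure]
  by (rule measurable_restrict_space3) auto

lemma measurable_sphere_measure_borel:
  "(\<lambda>x::'a::euclidean_space. x) \<in> sphere_measure \<rightarrow>\<^sub>M borel"
  unfolding measurable_cong_sets[OF sets_sphere_measure refl]
  by (rule measurable_restrict_space1) simp

lemma emeasure_lborel_uminus_vimage:
  "emeasure (lborel :: 'a::euclidean_space measure) (uminus -` C) = emeasure lborel C"
proof (cases "C \<in> sets borel")
  case True
  have "distr lborel borel (uminus :: 'a \<Rightarrow> 'a) = lborel"
    using lborel_affine[of "-1" "0::'a"] by (simp add: density_1)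
  then have "emeasure lborel C = emeasure (distr lborel borel (uminus :: 'a \<Rightarrow> 'a)) C"
    by simp
  then show ?thesis
    using True by (simp add: emeasure_distr)
next
  case False
  have "uminus -` C \<notin> sets (borel :: 'a measure)"
  proof
    assume "uminus -` C \<in> sets (borel :: 'a measure)"
    then have "uminus -` (uminus -` C) \<in> sets (borel :: 'a measure)"
      by (rule measurable_sets_borel[rotated]) simp
    moreover have "uminus -` (uminus -` C) = C"
      by auto
    ultimately show False
      using False by simp
  qed
  then show ?thesis
    using False by (simp add: emeasure_notin_sets)
qed

text \<open>Both measures are read off \<open>emeasure_measure_of_conv\<close> under the same side condition.\<close>

lemma emeasure_sphere_measure_eqI:
  fixes A B :: "'a::euclidean_space set"
  assumes "A \<in> sets sphere_measure" and "B \<in> sets sphere_measure"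
    and "emeasure lborel {r *\<^sub>R x | r x. 0 < r \<and> r \<le> 1 \<and> x \<in> A}
       = emeasure lborel {r *\<^sub>R x | r x. 0 < r \<and> r \<le> 1 \<and> x \<in> B}"
  shows "emeasure sphere_measure A = emeasure sphere_measure B"
proof -
  define \<mu> where "\<mu> C = ennreal (real DIM('a)) * emeasure lborel {r *\<^sub>R x | r x. 0 < r \<and> r \<le> 1 \<and> x \<in> C}"
    for C :: "'a set"
  have sigma: "sigma_sets (sphere (0::'a) 1) (sets (restrict_space borel (sphere 0 1))) = sets sphere_measure"
    using sets_sphere_measure[where 'a='a]
    by (simp add: sets.sigma_sets_eq[of "restrict_space borel (sphere 0 1)",
                    simplified space_restrict_space, simplified])
  have sphere_measure_eq:
    "sphere_measure = measure_of (sphere 0 1) (sets (restrict_space borel (sphere (0::'a) 1))) \<mu>"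
    unfolding sphere_measure_def \<mu>_def by simp
  have "emeasure sphere_measure C =
      (if C \<in> sets sphere_measure \<and> measure_space (sphere 0 1) (sets sphere_measure) \<mu> then \<mu> C else 0)"
    for C
    unfolding sigma[symmetric]
    by (subst sphere_measure_eq) (rule fun_cong[OF emeasure_measure_of_conv])
  moreover have "\<mu> A = \<mu> B"
    using assms(3) by (simp add: \<mu>_def)
  ultimately show ?thesis
    using assms(1,2) by simp
qed

lemma distr_uminus_sphere_measure:
  "distr sphere_measure sphere_measure uminus = (sphere_measure :: 'a::euclidean_space measure)"
proof (rule measure_eqI)
  fix X :: "'a set"
  assume "X \<in> sets (distr sphere_measure sphere_measure uminus)"
  then have X: "X \<in> sets sphere_measure"
    by simp
  define Y where "Y = uminus -` X \<inter> space sphere_measure"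
  have Y: "Y \<in> sets sphere_measure"
    unfolding Y_def using measurable_uminus_sphere_measure X by (rule measurable_sets)
  define cone where "cone A = {r *\<^sub>R x | r x. 0 < r \<and> r \<le> 1 \<and> x \<in> A}" for A :: "'a set"
  have X_sphere: "X \<subseteq> sphere 0 1"
    using X sets.sets_into_space space_sphere_measure by blast
  have "cone Y = uminus -` cone X"
  proof (rule set_eqI)
    fix z :: 'a
    show "z \<in> cone Y \<longleftrightarrow> z \<in> uminus -` cone X"
    proof
      assume "z \<in> cone Y"
      then obtain r x where "z = r *\<^sub>R x" "0 < r" "r \<le> 1" "- x \<in> X"
        unfolding cone_def Y_def by auto
      then show "z \<in> uminus -` cone X"
        unfolding cone_def by (auto intro!: exI[of _ r] exI[of _ "- x"])
    next
      assume "z \<in> uminus -` cone X"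
      then obtain r x where "- z = r *\<^sub>R x" "0 < r" "r \<le> 1" "x \<in> X"
        unfolding cone_def by auto
      moreover have "x \<in> sphere 0 1"
        using X_sphere \<open>x \<in> X\<close> by blast
      ultimately show "z \<in> cone Y"
        unfolding cone_def Y_def space_sphere_measure
        by (auto intro!: exI[of _ r] exI[of _ "- x"] simp: minus_equation_iff[of z])
    qed
  qed
  then have "emeasure sphere_measure Y = emeasure sphere_measure X"
    using Y X by (intro emeasure_sphere_measure_eqI) (simp_all add: emeasure_lborel_uminus_vimage flip: cone_def)
  then show "emeasure (distr sphere_measure sphere_measure uminus) X = emeasure sphere_measure X"
    using emeasure_distr[OF measurable_uminus_sphere_measure X] by (simp add: Y_def)
qed simp

lemma finite_measure_sphere_measure: "finite_measure (sphere_measure :: 'a::euclidean_space measure)"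
proof
  have "emeasure lborel {r *\<^sub>R x | r x. 0 < r \<and> r \<le> 1 \<and> x \<in> sphere (0::'a) 1}
      \<le> emeasure lborel (cball (0::'a) 1)"
    by (rule emeasure_mono) auto
  also have "\<dots> < \<infinity>"
    by (rule emeasure_lborel_cball_finite)
  finally show "emeasure sphere_measure (space (sphere_measure :: 'a measure)) \<noteq> \<infinity>"
    unfolding space_sphere_measure unfolding sphere_measure_def emeasure_measure_of_conv
    by (auto simp: ennreal_mult_eq_top_iff)
qed

lemma coll_space_eq_lborel_sphere_measure:
  "coll_space = (lborel :: ('a \<times> 'a) measure) \<Otimes>\<^sub>M (sphere_measure :: 'a::euclidean_space measure)"
  by (simp add: coll_space_def lborel_prod)

lemma pair_sigma_finite_lborel_sphere_measure:
  "pair_sigma_finite (lborel :: 'b::euclidean_space measure) (sphere_measure :: 'a::euclidean_space measure)"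
proof -
  interpret sphere_measure: finite_measure "sphere_measure :: 'a measure"
    by (rule finite_measure_sphere_measure)
  show ?thesis
    by unfold_locales
qed


definition scales_measure :: "'a measure \<Rightarrow> ennreal \<Rightarrow> ('a \<Rightarrow> 'a) \<Rightarrow> bool" where
  "scales_measure M c T \<longleftrightarrow>
     T \<in> M \<rightarrow>\<^sub>M M \<and> (\<forall>X \<in> sets M. emeasure M (T -` X \<inter> space M) = c * emeasure M X)"

lemma scales_measure_comp:
  assumes S: "scales_measure M c S" and T: "scales_measure M d T"
  shows "scales_measure M (c * d) (S \<circ> T)"
proof -
  have S_meas: "S \<in> M \<rightarrow>\<^sub>M M" and T_meas: "T \<in> M \<rightarrow>\<^sub>M M"
    using S T unfolding scales_measure_def by auto
  have "emeasure M ((S \<circ> T) -` X \<inter> space M) = c * d * emeasure M X" if X: "X \<in> sets M" for X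
  proof -
    have SX: "S -` X \<inter> space M \<in> sets M"
      using S_meas X by (rule measurable_sets)
    have "(S \<circ> T) -` X \<inter> space M = T -` (S -` X \<inter> space M) \<inter> space M"
      using T_meas by (auto dest: measurable_space)
    then have "emeasure M ((S \<circ> T) -` X \<inter> space M) = d * emeasure M (S -` X \<inter> space M)"
      using T SX unfolding scales_measure_def by (simp del: vimage_Int)
    also have "\<dots> = c * d * emeasure M X"
      using S X unfolding scales_measure_def by (simp add: ac_simps)
    finally show ?thesis .
  qed
  then show ?thesis
    using measurable_comp[OF T_meas S_meas] unfolding scales_measure_def by blast
qed

lemma distr_eq_density_if_scales_measure:
  assumes "scales_measure M c T"
  shows "distr M M T = density M (\<lambda>_. c)"
proof (rule measure_eqI)
  fix X
  assume "X \<in> sets (distr M M T)"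
  then show "emeasure (distr M M T) X = emeasure (density M (\<lambda>_. c)) X"
    using assms
    by (simp add: scales_measure_def emeasure_distr emeasure_density nn_integral_cmult_indicator)
qed simp

lemma
  fixes g :: "'a \<Rightarrow> real"
  assumes T: "scales_measure M (ennreal r) T" and r: "0 \<le> r" and g: "integrable M g"
  shows integrable_comp_scales_measure: "integrable M (\<lambda>x. g (T x))"
    and integral_comp_scales_measure: "(\<integral>x. g (T x) \<partial>M) = r * integral\<^sup>L M g"
proof -
  have T_meas [measurable]: "T \<in> M \<rightarrow>\<^sub>M M"
    using T unfolding scales_measure_def by blast
  have [measurable]: "g \<in> borel_measurable M"
    using g by auto
  note distr_T = distr_eq_density_if_scales_measure[OF T]
  have "integrable (density M (\<lambda>_. ennreal r)) g"
    using g r by (subst integrable_density) auto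
  then show "integrable M (\<lambda>x. g (T x))"
    by (simp add: distr_T[symmetric] integrable_distr_eq)
  have "(\<integral>x. g (T x) \<partial>M) = integral\<^sup>L (distr M M T) g"
    by (rule integral_distr[symmetric]) simp_all
  also have "\<dots> = (\<integral>x. r *\<^sub>R g x \<partial>M)"
    unfolding distr_T using r by (subst integral_density) simp_all
  finally show "(\<integral>x. g (T x) \<partial>M) = r * integral\<^sup>L M g"
    by simp
qed


section \<open>Linear maps scaling Lebesgue measure\<close>

lemma emeasure_lborel_translation_vimage:
  fixes c :: "'a::euclidean_space"
  assumes "S \<in> sets borel"
  shows "emeasure lborel ((\<lambda>x. x + c) -` S) = emeasure lborel S"
proof -
  have "emeasure lborel S = emeasure (distr lborel borel ((+) c)) S"
    by (simp add: lborel_distr_plus)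
  also have "\<dots> = emeasure lborel ((+) c -` S)"
    using assms by (simp add: emeasure_distr)
  moreover have "(\<lambda>x. x + c) = (+) c"
    by (auto simp: add.commute)
  ultimately show ?thesis
    by simp
qed

lemma scales_measure_shear_fst:
  fixes A :: "'b::euclidean_space \<Rightarrow> 'a::euclidean_space"
  assumes [measurable]: "A \<in> borel_measurable borel"
  shows "scales_measure lborel 1 (\<lambda>(x, y). (x + A y, y))"
proof -
  let ?T = "\<lambda>(x, y). (x + A y, y)"
  have "emeasure (lborel \<Otimes>\<^sub>M lborel) (?T -` X) = emeasure (lborel \<Otimes>\<^sub>M lborel) X"
    if X: "X \<in> sets (lborel \<Otimes>\<^sub>M lborel)" for X :: "('a \<times> 'b) set"
  proof -
    have "?T -` X \<in> sets (lborel \<Otimes>\<^sub>M lborel)"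
      using measurable_sets[OF _ X, of ?T "lborel \<Otimes>\<^sub>M lborel"] by (simp add: space_pair_measure)
    then have "emeasure (lborel \<Otimes>\<^sub>M lborel) (?T -` X)
        = (\<integral>\<^sup>+y. emeasure lborel ((\<lambda>x. x + A y) -` ((\<lambda>x. (x, y)) -` X)) \<partial>lborel)"
      by (simp add: lborel_pair.emeasure_pair_measure_alt2 vimage_def)
    also have "\<dots> = (\<integral>\<^sup>+y. emeasure lborel ((\<lambda>x. (x, y)) -` X) \<partial>lborel)"
      using sets_Pair2[OF X] by (simp add: emeasure_lborel_translation_vimage)
    also have "\<dots> = emeasure (lborel \<Otimes>\<^sub>M lborel) X"
      by (rule lborel_pair.emeasure_pair_measure_alt2[OF X, symmetric])
    finally show ?thesis .
  qed
  moreover have "?T \<in> lborel \<Otimes>\<^sub>M lborel \<rightarrow>\<^sub>M lborel \<Otimes>\<^sub>M lborel"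
    by measurable
  ultimately show ?thesis
    unfolding scales_measure_def lborel_prod[symmetric] by (simp add: space_pair_measure)
qed

lemma scales_measure_shear_snd:
  fixes A :: "'a::euclidean_space \<Rightarrow> 'b::euclidean_space"
  assumes [measurable]: "A \<in> borel_measurable borel"
  shows "scales_measure lborel 1 (\<lambda>(x, y). (x, y + A x))"
proof -
  let ?T = "\<lambda>(x, y). (x, y + A x)"
  have "emeasure (lborel \<Otimes>\<^sub>M lborel) (?T -` X) = emeasure (lborel \<Otimes>\<^sub>M lborel) X"
    if X: "X \<in> sets (lborel \<Otimes>\<^sub>M lborel)" for X :: "('a \<times> 'b) set"
  proof -
    have "?T -` X \<in> sets (lborel \<Otimes>\<^sub>M lborel)"
      using measurable_sets[OF _ X, of ?T "lborel \<Otimes>\<^sub>M lborel"] by (simp add: space_pair_measure)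
    then have "emeasure (lborel \<Otimes>\<^sub>M lborel) (?T -` X)
        = (\<integral>\<^sup>+x. emeasure lborel ((\<lambda>y. y + A x) -` (Pair x -` X)) \<partial>lborel)"
      by (simp add: lborel.emeasure_pair_measure_alt vimage_def)
    also have "\<dots> = (\<integral>\<^sup>+x. emeasure lborel (Pair x -` X) \<partial>lborel)"
      using sets_Pair1[OF X] by (simp add: emeasure_lborel_translation_vimage)
    also have "\<dots> = emeasure (lborel \<Otimes>\<^sub>M lborel) X"
      by (rule lborel.emeasure_pair_measure_alt[OF X, symmetric])
    finally show ?thesis .
  qed
  moreover have "?T \<in> lborel \<Otimes>\<^sub>M lborel \<rightarrow>\<^sub>M lborel \<Otimes>\<^sub>M lborel"
    by measurable
  ultimately show ?thesis
    unfolding scales_measure_def lborel_prod[symmetric] by (simp add: space_pair_measure)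
qed

lemma scales_measure_map_snd:
  fixes G :: "'b::euclidean_space \<Rightarrow> 'b"
  assumes G: "scales_measure lborel c G"
  shows "scales_measure lborel c (\<lambda>(x::'a::euclidean_space, y). (x, G y))"
proof -
  have [measurable]: "G \<in> borel_measurable borel"
    using G unfolding scales_measure_def by simp
  let ?T = "\<lambda>(x, y). (x, G y)"
  have "emeasure (lborel \<Otimes>\<^sub>M lborel) (?T -` X) = c * emeasure (lborel \<Otimes>\<^sub>M lborel) X"
    if X: "X \<in> sets (lborel \<Otimes>\<^sub>M lborel)" for X :: "('a \<times> 'b) set"
  proof -
    have "?T -` X \<in> sets (lborel \<Otimes>\<^sub>M lborel)"
      using measurable_sets[OF _ X, of ?T "lborel \<Otimes>\<^sub>M lborel"] by (simp add: space_pair_measure)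
    then have "emeasure (lborel \<Otimes>\<^sub>M lborel) (?T -` X)
        = (\<integral>\<^sup>+x. emeasure lborel (G -` (Pair x -` X)) \<partial>lborel)"
      by (simp add: lborel.emeasure_pair_measure_alt vimage_def)
    also have "\<dots> = (\<integral>\<^sup>+x. c * emeasure lborel (Pair x -` X) \<partial>lborel)"
      using G sets_Pair1[OF X] unfolding scales_measure_def by simp
    also have "\<dots> = c * emeasure (lborel \<Otimes>\<^sub>M lborel) X"
      using lborel_pair.measurable_emeasure_Pair1[OF X]
      by (simp add: nn_integral_cmult lborel.emeasure_pair_measure_alt[OF X])
    finally show ?thesis .
  qed
  moreover have "?T \<in> lborel \<Otimes>\<^sub>M lborel \<rightarrow>\<^sub>M lborel \<Otimes>\<^sub>M lborel"
    by measurable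
  ultimately show ?thesis
    unfolding scales_measure_def lborel_prod[symmetric] by (simp add: space_pair_measure)
qed

lemma scales_measure_uminus: "scales_measure lborel 1 (uminus :: 'a::euclidean_space \<Rightarrow> 'a)"
  unfolding scales_measure_def by (simp add: emeasure_lborel_uminus_vimage)

lemma scales_measure_scaleR:
  fixes c :: real
  assumes c: "c \<noteq> 0"
  shows "scales_measure lborel (ennreal (1 / \<bar>c\<bar> ^ DIM('a))) (\<lambda>x::'a::euclidean_space. c *\<^sub>R x)"
proof -
  have "emeasure lborel ((\<lambda>x::'a. c *\<^sub>R x) -` S) = ennreal (1 / \<bar>c\<bar> ^ DIM('a)) * emeasure lborel S"
    if S: "S \<in> sets borel" for S
  proof -
    have "emeasure lborel S = emeasure (density (distr lborel borel (\<lambda>x::'a. 0 + c *\<^sub>R x)) (\<lambda>_. \<bar>c\<bar> ^ DIM('a))) S"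
      using lborel_affine[OF c, of "0::'a"] by simp
    also have "\<dots> = ennreal (\<bar>c\<bar> ^ DIM('a)) * emeasure lborel ((\<lambda>x::'a. c *\<^sub>R x) -` S)"
      using S by (simp add: emeasure_density nn_integral_cmult_indicator emeasure_distr)
    finally have "emeasure lborel S = ennreal (\<bar>c\<bar> ^ DIM('a)) * emeasure lborel ((\<lambda>x::'a. c *\<^sub>R x) -` S)" .
    moreover have "ennreal (1 / \<bar>c\<bar> ^ DIM('a)) * ennreal (\<bar>c\<bar> ^ DIM('a)) = 1"
      using c by (simp add: ennreal_mult''[symmetric])
    ultimately show ?thesis
      by (simp add: mult.assoc[symmetric])
  qed
  then show ?thesis
    unfolding scales_measure_def by simp
qed

definition reflection :: "'a::real_inner \<Rightarrow> 'a \<Rightarrow> 'a" where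
  "reflection \<omega> w = w - (2 * (w \<bullet> \<omega>)) *\<^sub>R \<omega>"

lemma borel_measurable_reflection [measurable]: "reflection \<omega> \<in> borel_measurable borel"
  unfolding reflection_def by (rule borel_measurable_continuous_onI) (intro continuous_intros)

lemma reflection_linear:
  "reflection \<omega> (x + y) = reflection \<omega> x + reflection \<omega> y"
  "reflection \<omega> (- x) = - reflection \<omega> x"
  "reflection \<omega> (x - y) = reflection \<omega> x - reflection \<omega> y"
  "reflection \<omega> (s *\<^sub>R x) = s *\<^sub>R reflection \<omega> x"
  unfolding reflection_def by (simp_all add: algebra_simps inner_add_left inner_diff_left)

lemma reflection_uminus: "reflection (- \<omega>) = reflection \<omega>"
  unfolding reflection_def by (simp add: fun_eq_iff)

lemma reflection_reflection: "norm \<omega> = 1 \<Longrightarrow> reflection \<omega> (reflection \<omega> w) = w"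
  unfolding reflection_def by (simp add: algebra_simps inner_diff_left dot_square_norm)

lemma inner_reflection: "norm \<omega> = 1 \<Longrightarrow> reflection \<omega> x \<bullet> \<omega> = - (x \<bullet> \<omega>)"
  unfolding reflection_def by (simp add: inner_diff_left dot_square_norm)

lemma norm_reflection:
  assumes "norm \<omega> = 1"
  shows "norm (reflection \<omega> x) = norm x"
proof -
  have unit: "\<omega> \<bullet> \<omega> = 1"
    using assms by (simp add: dot_square_norm)
  have "reflection \<omega> x \<bullet> reflection \<omega> x = x \<bullet> x"
    unfolding reflection_def
    by (simp add: inner_diff_left inner_diff_right unit inner_commute[of \<omega> x] algebra_simps)
  then show ?thesis
    by (simp add: norm_eq_sqrt_inner)
qed

text \<open>As a product of six shears, the reflection of both coordinates preserves the product
  measure; evaluating on squares of boxes then gives invariance under a single reflection.\<close>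

lemma scales_measure_reflection_pair:
  fixes \<omega> :: "'a::euclidean_space"
  assumes \<omega>: "norm \<omega> = 1"
  shows "scales_measure lborel 1 (\<lambda>(x, y). (reflection \<omega> x, reflection \<omega> y))"
proof -
  let ?R = "reflection \<omega>"
  have "scales_measure lborel (1 * 1 * 1 * 1 * 1 * 1)
      ((\<lambda>(x, y). (x + ?R y, y)) \<circ> (\<lambda>(x, y). (x, y + - ?R x)) \<circ> (\<lambda>(x, y). (x + ?R y, y)) \<circ>
       (\<lambda>(x, y). (x + - y, y)) \<circ> (\<lambda>(x, y). (x, y + x)) \<circ> (\<lambda>(x::'a, y::'a). (x + - y, y)))"
    by (intro scales_measure_comp scales_measure_shear_fst scales_measure_shear_snd
        borel_measurable_uminus borel_measurable_reflection measurable_ident_sets refl)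
  moreover have "((\<lambda>(x, y). (x + ?R y, y)) \<circ> (\<lambda>(x, y). (x, y + - ?R x)) \<circ> (\<lambda>(x, y). (x + ?R y, y)) \<circ>
       (\<lambda>(x, y). (x + - y, y)) \<circ> (\<lambda>(x, y). (x, y + x)) \<circ> (\<lambda>(x::'a, y::'a). (x + - y, y)))
      = (\<lambda>(x, y). (?R x, ?R y))"
    by (auto simp: fun_eq_iff reflection_linear reflection_reflection[OF \<omega>])
  ultimately show ?thesis
    by simp
qed

lemma ennreal_mult_self_cancel:
  fixes x y :: ennreal
  assumes "x * x = y * y" and "y < \<infinity>"
  shows "x = y"
proof -
  obtain b where b: "y = ennreal b" "0 \<le> b"
    using assms(2) by (cases y) auto
  have "x \<noteq> \<infinity>"
    using assms(1) b by (auto simp: ennreal_mult''[symmetric])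
  then obtain a where a: "x = ennreal a" "0 \<le> a"
    by (cases x) auto
  have "a * a = b * b"
    using assms(1) a b by (simp add: ennreal_mult''[symmetric])
  then have "a = b"
    using a b by (metis abs_of_nonneg power2_eq_square real_sqrt_abs)
  then show ?thesis
    using a b by simp
qed

lemma scales_measure_reflection:
  fixes \<omega> :: "'a::euclidean_space"
  assumes \<omega>: "norm \<omega> = 1"
  shows "scales_measure lborel 1 (reflection \<omega>)"
proof -
  have box: "emeasure lborel (reflection \<omega> -` box l u) = emeasure lborel (box l u)" for l u :: 'a
  proof -
    have "reflection \<omega> -` box l u \<in> sets borel"
      by (rule measurable_sets_borel[OF borel_measurable_reflection]) simp
    moreover have "(\<lambda>(x, y). (reflection \<omega> x, reflection \<omega> y)) -` (box l u \<times> box l u)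
        = reflection \<omega> -` box l u \<times> reflection \<omega> -` box l u"
      by auto
    moreover have "emeasure (lborel \<Otimes>\<^sub>M lborel)
          ((\<lambda>(x, y). (reflection \<omega> x, reflection \<omega> y)) -` (box l u \<times> box l u))
        = emeasure (lborel \<Otimes>\<^sub>M lborel) (box l u \<times> box l u)"
      using scales_measure_reflection_pair[OF \<omega>]
      unfolding scales_measure_def lborel_prod[symmetric] by (simp add: space_pair_measure)
    ultimately have "emeasure lborel (reflection \<omega> -` box l u) * emeasure lborel (reflection \<omega> -` box l u)
        = emeasure lborel (box l u) * emeasure lborel (box l u)"
      by (simp add: lborel.emeasure_pair_measure_Times)
    then show ?thesis
      by (rule ennreal_mult_self_cancel) (simp add: emeasure_lborel_box_eq)
  qed
  have distr_lborel: "distr lborel borel (reflection \<omega>) = lborel"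
    by (rule lborel_eqI[symmetric]) (simp_all add: emeasure_distr box emeasure_lborel_box_eq)
  have "emeasure lborel (reflection \<omega> -` S) = emeasure lborel S" if "S \<in> sets borel" for S
    using emeasure_distr[of "reflection \<omega>" lborel borel S] that by (simp add: distr_lborel)
  then show ?thesis
    unfolding scales_measure_def by simp
qed

text \<open>With \<open>w = v - v\<^sub>1\<close> and \<open>c = v - \<alpha> w\<close>, the factorisation used is
  \<open>(v, v\<^sub>1) \<mapsto> (v, w) \<mapsto> (c, w) \<mapsto> (c, R w) \<mapsto> (c + a R w, R w) \<mapsto> (c + a R w, (a + b) R w)
   \<mapsto> (c + a R w, c - b R w)\<close>; only the dilation changes the measure.\<close>

lemma scales_measure_reflect_relative_velocity:
  fixes \<omega> :: "'a::euclidean_space" and \<alpha> a b :: real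
  assumes \<omega>: "norm \<omega> = 1" and ab: "a + b \<noteq> 0"
  shows "scales_measure lborel (ennreal (1 / \<bar>a + b\<bar> ^ DIM('a)))
    (\<lambda>(v, v1). (v - \<alpha> *\<^sub>R (v - v1) + a *\<^sub>R reflection \<omega> (v - v1),
                v - \<alpha> *\<^sub>R (v - v1) - b *\<^sub>R reflection \<omega> (v - v1)))"
proof -
  let ?s = "a + b"
  have "scales_measure lborel (1 * 1 * ennreal (1 / \<bar>a + b\<bar> ^ DIM('a)) * 1 * 1 * 1 * 1 * 1)
      ((\<lambda>(x, y). (x, - y)) \<circ> (\<lambda>(x, y). (x, y + - x)) \<circ> (\<lambda>(x, y). (x, ?s *\<^sub>R y)) \<circ>
       (\<lambda>(x, y). (x + a *\<^sub>R y, y)) \<circ> (\<lambda>(x, y). (x, reflection \<omega> y)) \<circ>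
       (\<lambda>(x, y). (x + (- \<alpha>) *\<^sub>R y, y)) \<circ> (\<lambda>(x, y). (x, y + x)) \<circ> (\<lambda>(x::'a, y::'a). (x, - y)))"
    by (intro scales_measure_comp scales_measure_map_snd scales_measure_shear_fst
        scales_measure_shear_snd scales_measure_uminus scales_measure_reflection[OF \<omega>]
        scales_measure_scaleR[OF ab] borel_measurable_uminus borel_measurable_scaleR
        borel_measurable_const measurable_ident_sets refl)
  moreover have "((\<lambda>(x, y). (x, - y)) \<circ> (\<lambda>(x, y). (x, y + - x)) \<circ> (\<lambda>(x, y). (x, ?s *\<^sub>R y)) \<circ>
       (\<lambda>(x, y). (x + a *\<^sub>R y, y)) \<circ> (\<lambda>(x, y). (x, reflection \<omega> y)) \<circ>
       (\<lambda>(x, y). (x + (- \<alpha>) *\<^sub>R y, y)) \<circ> (\<lambda>(x, y). (x, y + x)) \<circ> (\<lambda>(x::'a, y::'a). (x, - y)))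
      = (\<lambda>(v, v1). (v - \<alpha> *\<^sub>R (v - v1) + a *\<^sub>R reflection \<omega> (v - v1),
                    v - \<alpha> *\<^sub>R (v - v1) - b *\<^sub>R reflection \<omega> (v - v1)))"
    by (auto simp: fun_eq_iff algebra_simps)
  ultimately show ?thesis
    by simp
qed


section \<open>Algebra of the collision rule\<close>

lemma collision_coefficients:
  fixes p p1 q q1 :: real
  assumes pos: "0 < p" "0 < p1" "0 < q" "0 < q1" and mass: "p + p1 = q + q1"
  defines "a \<equiv> sqrt (p * p1) / (p + p1) * sqrt (q1 / q)"
    and "b \<equiv> sqrt (p * p1) / (p + p1) * sqrt (q / q1)"
    and "a' \<equiv> sqrt (q * q1) / (q + q1) * sqrt (p1 / p)"
    and "b' \<equiv> sqrt (q * q1) / (q + q1) * sqrt (p / p1)"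
  shows "q * a = q1 * b" and "a + b = sqrt (p * p1) / sqrt (q * q1)"
    and "a' * (sqrt (p * p1) / sqrt (q * q1)) = p1 / (p + p1)"
    and "b' * (sqrt (p * p1) / sqrt (q * q1)) = p / (p + p1)"
proof -
  define P P1 Q Q1 where "P = sqrt p" and "P1 = sqrt p1" and "Q = sqrt q" and "Q1 = sqrt q1"
  have sq: "p = P\<^sup>2" "p1 = P1\<^sup>2" "q = Q\<^sup>2" "q1 = Q1\<^sup>2"
    using pos by (simp_all add: P_def P1_def Q_def Q1_def)
  have ps: "0 < P" "0 < P1" "0 < Q" "0 < Q1"
    using pos by (simp_all add: P_def P1_def Q_def Q1_def)
  have roots: "sqrt (p * p1) = P * P1" "sqrt (q * q1) = Q * Q1" "sqrt (q1 / q) = Q1 / Q"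
    "sqrt (q / q1) = Q / Q1" "sqrt (p1 / p) = P1 / P" "sqrt (p / p1) = P / P1"
    by (simp_all add: P_def P1_def Q_def Q1_def real_sqrt_mult real_sqrt_divide)
  have mass': "P\<^sup>2 + P1\<^sup>2 = Q\<^sup>2 + Q1\<^sup>2"
    using mass sq by simp
  have "P\<^sup>2 + P1\<^sup>2 \<noteq> 0"
    using ps by (metis add_pos_pos less_irrefl zero_less_power)
  define X where "X = P * P1 / (P\<^sup>2 + P1\<^sup>2)"
  have a: "a = X * (Q1 / Q)" and b: "b = X * (Q / Q1)"
    unfolding a_def b_def X_def roots unfolding sq by simp_all
  have a': "a' = Q * Q1 / (P\<^sup>2 + P1\<^sup>2) * (P1 / P)" and b': "b' = Q * Q1 / (P\<^sup>2 + P1\<^sup>2) * (P / P1)"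
    unfolding a'_def b'_def roots unfolding sq mass' by simp_all
  show "q * a = q1 * b"
    unfolding a b sq using ps by (simp add: field_simps power2_eq_square)
  have "a + b = X * ((Q1\<^sup>2 + Q\<^sup>2) / (Q * Q1))"
    unfolding a b using ps by (simp add: field_simps power2_eq_square)
  also have "\<dots> = P * P1 / (Q * Q1)"
    unfolding X_def using mass' \<open>P\<^sup>2 + P1\<^sup>2 \<noteq> 0\<close> by (simp add: add.commute)
  finally have ab: "a + b = P * P1 / (Q * Q1)" .
  then show "a + b = sqrt (p * p1) / sqrt (q * q1)"
    unfolding roots .
  have "a' * (P * P1 / (Q * Q1)) = (P * Q * Q1) / (P * Q * Q1) * (P1\<^sup>2 / (P\<^sup>2 + P1\<^sup>2))"
    unfolding a' by (simp add: power2_eq_square)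
  then show "a' * (sqrt (p * p1) / sqrt (q * q1)) = p1 / (p + p1)"
    unfolding roots unfolding sq using ps by simp
  have "b' * (P * P1 / (Q * Q1)) = (P1 * Q * Q1) / (P1 * Q * Q1) * (P\<^sup>2 / (P\<^sup>2 + P1\<^sup>2))"
    unfolding b' by (simp add: power2_eq_square)
  then show "b' * (sqrt (p * p1) / sqrt (q * q1)) = p / (p + p1)"
    unfolding roots unfolding sq using ps by simp
qed

lemma centre_of_mass_eq:
  fixes p p1 :: real and v v1 :: "'a::real_vector"
  assumes "p + p1 \<noteq> 0"
  shows "(1 / (p + p1)) *\<^sub>R (p *\<^sub>R v + p1 *\<^sub>R v1) = v - (p1 / (p + p1)) *\<^sub>R (v - v1)"
proof -
  have "v - (p1 / (p + p1)) *\<^sub>R (v - v1) = (1 - p1 / (p + p1)) *\<^sub>R v + (p1 / (p + p1)) *\<^sub>R v1"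
    by (simp add: algebra_simps)
  also have "1 - p1 / (p + p1) = p / (p + p1)"
    using assms by (simp add: field_simps)
  finally show ?thesis
    by (simp add: scaleR_add_right divide_inverse_commute)
qed

lemma post_v_eq:
  "post_v m m1 m' v v1 \<omega> = (1 / real (m + m1)) *\<^sub>R (real m *\<^sub>R v + real m1 *\<^sub>R v1) +
     (sqrt (real m * real m1) / real (m + m1) * sqrt (real (m + m1 - m') / real m')) *\<^sub>R
       reflection \<omega> (v - v1)"
  unfolding post_v_def reflection_def ..

lemma post_v1_eq:
  "post_v1 m m1 m' v v1 \<omega> = (1 / real (m + m1)) *\<^sub>R (real m *\<^sub>R v + real m1 *\<^sub>R v1) -
     (sqrt (real m * real m1) / real (m + m1) * sqrt (real m' / real (m + m1 - m'))) *\<^sub>R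
       reflection \<omega> (v - v1)"
  unfolding post_v1_def reflection_def ..

lemma triples_pos:
  assumes "(m, m1, m') \<in> triples"
  shows "0 < real m" "0 < real m1" "0 < real m'" "0 < real (m + m1 - m')"
  using assms by (auto simp: triples_def)

lemma triples_mass:
  assumes "(m, m1, m') \<in> triples"
  shows "real m + real m1 = real m' + real (m + m1 - m')"
  using assms by (auto simp: triples_def)

lemma momentum_post_v:
  assumes t: "(m, m1, m') \<in> triples"
  shows "real m' *\<^sub>R post_v m m1 m' v v1 \<omega> + real (m + m1 - m') *\<^sub>R post_v1 m m1 m' v v1 \<omega>
    = real m *\<^sub>R v + real m1 *\<^sub>R v1"
proof -
  note pos = triples_pos[OF t]
  define q1 where "q1 = real (m + m1 - m')"
  define a b where "a = sqrt (real m * real m1) / real (m + m1) * sqrt (q1 / real m')"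
    and "b = sqrt (real m * real m1) / real (m + m1) * sqrt (real m' / q1)"
  define c r where "c = (1 / real (m + m1)) *\<^sub>R (real m *\<^sub>R v + real m1 *\<^sub>R v1)"
    and "r = reflection \<omega> (v - v1)"
  have coeff: "real m' * a = q1 * b"
    using collision_coefficients(1)[OF pos triples_mass[OF t]] unfolding a_def b_def q1_def of_nat_add .
  have "real m' *\<^sub>R post_v m m1 m' v v1 \<omega> + q1 *\<^sub>R post_v1 m m1 m' v v1 \<omega>
      = real m' *\<^sub>R (c + a *\<^sub>R r) + q1 *\<^sub>R (c - b *\<^sub>R r)"
    unfolding post_v_eq post_v1_eq a_def b_def c_def r_def q1_def ..
  also have "\<dots> = (real m' + q1) *\<^sub>R c + (real m' * a - q1 * b) *\<^sub>R r"
    by (simp add: algebra_simps)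
  also have "real m' + q1 = real (m + m1)"
    using t by (simp add: q1_def triples_def)
  also have "real (m + m1) *\<^sub>R c + (real m' * a - q1 * b) *\<^sub>R r = real m *\<^sub>R v + real m1 *\<^sub>R v1"
    using pos(1) by (simp add: coeff c_def)
  finally show ?thesis
    unfolding q1_def .
qed

lemma relative_post_v:
  assumes t: "(m, m1, m') \<in> triples"
  shows "post_v m m1 m' v v1 \<omega> - post_v1 m m1 m' v v1 \<omega>
    = (sqrt (real m * real m1) / sqrt (real m' * real (m + m1 - m'))) *\<^sub>R reflection \<omega> (v - v1)"
proof -
  note pos = triples_pos[OF t]
  define a b where "a = sqrt (real m * real m1) / real (m + m1) * sqrt (real (m + m1 - m') / real m')"
    and "b = sqrt (real m * real m1) / real (m + m1) * sqrt (real m' / real (m + m1 - m'))"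
  define c r where "c = (1 / real (m + m1)) *\<^sub>R (real m *\<^sub>R v + real m1 *\<^sub>R v1)"
    and "r = reflection \<omega> (v - v1)"
  have "post_v m m1 m' v v1 \<omega> - post_v1 m m1 m' v v1 \<omega> = (c + a *\<^sub>R r) - (c - b *\<^sub>R r)"
    unfolding post_v_eq post_v1_eq a_def b_def c_def r_def ..
  also have "\<dots> = (a + b) *\<^sub>R r"
    by (simp add: algebra_simps)
  also have "a + b = sqrt (real m * real m1) / sqrt (real m' * real (m + m1 - m'))"
    using collision_coefficients(2)[OF pos triples_mass[OF t]] unfolding a_def b_def of_nat_add .
  finally show ?thesis
    unfolding r_def .
qed

lemma post_v_reverse:
  fixes v v1 \<omega> :: "'a::real_inner"
  assumes t: "(m, m1, m') \<in> triples" and \<omega>: "norm \<omega> = 1"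
  defines "u \<equiv> post_v m m1 m' v v1 \<omega>" and "u1 \<equiv> post_v1 m m1 m' v v1 \<omega>"
  shows "post_v m' (m + m1 - m') m u u1 (- \<omega>) = v"
    and "post_v1 m' (m + m1 - m') m u u1 (- \<omega>) = v1"
proof -
  note pos = triples_pos[OF t]
  define p p1 q q1 where "p = real m" and "p1 = real m1" and "q = real m'"
    and "q1 = real (m + m1 - m')"
  have masses: "m' + (m + m1 - m') - m = m1"
    using t by (auto simp: triples_def)
  have mass: "p + p1 = q + q1"
    using triples_mass[OF t] unfolding p_def p1_def q_def q1_def .
  have nonzero: "p + p1 \<noteq> 0"
    using pos by (simp add: p_def p1_def)
  note coeffs = collision_coefficients(3,4)[OF pos[folded p_def p1_def q_def q1_def] mass]
  define k where "k = sqrt (p * p1) / sqrt (q * q1)"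
  have centre: "(1 / real (m' + (m + m1 - m'))) *\<^sub>R (real m' *\<^sub>R u + real (m + m1 - m') *\<^sub>R u1)
      = v - (p1 / (p + p1)) *\<^sub>R (v - v1)"
    unfolding u_def u1_def momentum_post_v[OF t]
    unfolding of_nat_add q_def[symmetric] q1_def[symmetric] mass[symmetric] p_def[symmetric] p1_def[symmetric]
    by (rule centre_of_mass_eq[OF nonzero])
  have relative: "reflection (- \<omega>) (u - u1) = k *\<^sub>R (v - v1)"
    unfolding u_def u1_def relative_post_v[OF t] reflection_uminus reflection_linear(4)
      reflection_reflection[OF \<omega>] k_def p_def p1_def q_def q1_def ..
  have "post_v m' (m + m1 - m') m u u1 (- \<omega>)
      = v - (p1 / (p + p1)) *\<^sub>R (v - v1) + (sqrt (q * q1) / (q + q1) * sqrt (p1 / p) * k) *\<^sub>R (v - v1)"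
    unfolding post_v_eq centre relative masses scaleR_scaleR
    unfolding of_nat_add p_def p1_def q_def q1_def ..
  also have "\<dots> = v"
    unfolding k_def coeffs(1) by simp
  finally show "post_v m' (m + m1 - m') m u u1 (- \<omega>) = v" .
  have "post_v1 m' (m + m1 - m') m u u1 (- \<omega>)
      = v - (p1 / (p + p1)) *\<^sub>R (v - v1) - (sqrt (q * q1) / (q + q1) * sqrt (p / p1) * k) *\<^sub>R (v - v1)"
    unfolding post_v1_eq centre relative masses scaleR_scaleR
    unfolding of_nat_add p_def p1_def q_def q1_def ..
  also have "\<dots> = v - (p1 / (p + p1) + p / (p + p1)) *\<^sub>R (v - v1)"
    unfolding k_def coeffs(2) by (simp add: algebra_simps)
  also have "p1 / (p + p1) + p / (p + p1) = 1"
    using nonzero by (simp add: add_divide_distrib[symmetric] add.commute)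
  finally show "post_v1 m' (m + m1 - m') m u u1 (- \<omega>) = v1"
    by simp
qed

lemma coll_dom_reverse:
  assumes t: "(m, m1, m') \<in> triples" and \<omega>: "norm \<omega> = 1"
  shows "(post_v m m1 m' v v1 \<omega> - post_v1 m m1 m' v v1 \<omega>) \<bullet> (- \<omega>) \<le> 0 \<longleftrightarrow> (v - v1) \<bullet> \<omega> \<le> 0"
proof -
  define k where "k = sqrt (real m * real m1) / sqrt (real m' * real (m + m1 - m'))"
  have "0 < k"
    using triples_pos[OF t] by (simp add: k_def)
  then show ?thesis
    unfolding relative_post_v[OF t, folded k_def] inner_minus_right inner_scaleR_left
      inner_reflection[OF \<omega>]
    by (simp add: mult_le_0_iff)
qed

lemma Bker_reverse:
  assumes t: "(m, m1, m') \<in> triples" and \<omega>: "norm \<omega> = 1"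
  shows "Bker B m' (m + m1 - m') (post_v m m1 m' v v1 \<omega>) (post_v1 m m1 m' v v1 \<omega>) (- \<omega>)
    = Bker B m m1 v v1 \<omega>"
proof -
  note pos = triples_pos[OF t]
  define X Y where "X = real m * real m1" and "Y = real m' * real (m + m1 - m')"
  define k where "k = sqrt X / sqrt Y"
  have XY: "0 < X" "0 < Y"
    using pos by (simp_all add: X_def Y_def)
  have k: "0 < k" "Y * k\<^sup>2 = X"
    using XY by (simp_all add: k_def power_divide)
  have M: "real (m' + (m + m1 - m')) = real (m + m1)"
    using t by (simp add: triples_def)
  have rel: "post_v m m1 m' v v1 \<omega> - post_v1 m m1 m' v v1 \<omega> = k *\<^sub>R reflection \<omega> (v - v1)"
    unfolding k_def X_def Y_def by (rule relative_post_v[OF t])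
  have "Y / real (m + m1) * (norm (k *\<^sub>R reflection \<omega> (v - v1)))\<^sup>2
      = (Y * k\<^sup>2) / real (m + m1) * (norm (v - v1))\<^sup>2"
    using k(1) by (simp add: norm_reflection[OF \<omega>] power_mult_distrib)
  then have energy: "real m' * real (m + m1 - m') / real (m' + (m + m1 - m')) *
        (norm (k *\<^sub>R reflection \<omega> (v - v1)))\<^sup>2 = real m * real m1 / real (m + m1) * (norm (v - v1))\<^sup>2"
    unfolding M k(2) by (simp add: X_def Y_def)
  have "(- \<omega>) \<bullet> reflection \<omega> (v - v1) = \<omega> \<bullet> (v - v1)"
    using inner_reflection[OF \<omega>, of "v - v1"] by (simp add: inner_commute)
  then have angle: "(- \<omega>) \<bullet> (k *\<^sub>R reflection \<omega> (v - v1) /\<^sub>R norm (k *\<^sub>R reflection \<omega> (v - v1)))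
      = \<omega> \<bullet> ((v - v1) /\<^sub>R norm (v - v1))"
    using k(1) by (simp add: norm_reflection[OF \<omega>])
  show ?thesis
    unfolding Bker_def rel energy angle ..
qed


section \<open>The collision map on the collision space\<close>

definition collision_map :: "nat \<Rightarrow> nat \<Rightarrow> nat \<Rightarrow> ('a::real_inner \<times> 'a) \<times> 'a \<Rightarrow> ('a \<times> 'a) \<times> 'a"
  where "collision_map m m1 m' =
    (\<lambda>((v, v1), \<omega>). ((post_v m m1 m' v v1 \<omega>, post_v1 m m1 m' v v1 \<omega>), - \<omega>))"

definition collision_jacobian :: "nat \<Rightarrow> nat \<Rightarrow> nat \<Rightarrow> nat \<Rightarrow> real" where
  "collision_jacobian d m m1 m' = (real m' * real (m + m1 - m') / (real m * real m1)) powr (real d / 2)"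

lemma sqrt_power_eq_powr: "0 < x \<Longrightarrow> sqrt x ^ n = x powr (real n / 2)"
proof -
  assume x: "0 < x"
  have "sqrt x ^ n = (x powr (1 / 2)) ^ n"
    using x by (simp add: powr_half_sqrt)
  also have "\<dots> = (x powr (1 / 2)) powr (real n)"
    using x by (simp add: powr_realpow)
  also have "\<dots> = x powr (real n / 2)"
    by (simp add: powr_powr)
  finally show ?thesis .
qed

lemma scales_measure_post_velocities:
  fixes \<omega> :: "'a::euclidean_space"
  assumes t: "(m, m1, m') \<in> triples" and \<omega>: "norm \<omega> = 1"
  shows "scales_measure lborel (ennreal (collision_jacobian DIM('a) m m1 m'))
    (\<lambda>(v, v1). (post_v m m1 m' v v1 \<omega>, post_v1 m m1 m' v v1 \<omega>))"
proof -
  note pos = triples_pos[OF t]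
  define a b where "a = sqrt (real m * real m1) / real (m + m1) * sqrt (real (m + m1 - m') / real m')"
    and "b = sqrt (real m * real m1) / real (m + m1) * sqrt (real m' / real (m + m1 - m'))"
  define X Y where "X = real m * real m1" and "Y = real m' * real (m + m1 - m')"
  have XY: "0 < X" "0 < Y"
    using pos by (simp_all add: X_def Y_def)
  have ab: "a + b = sqrt (X / Y)"
    using collision_coefficients(2)[OF pos triples_mass[OF t]]
    unfolding a_def b_def X_def Y_def of_nat_add real_sqrt_divide .
  have "1 / \<bar>a + b\<bar> ^ DIM('a) = 1 / (X / Y) powr (real DIM('a) / 2)"
    using XY by (simp add: ab sqrt_power_eq_powr)
  also have "\<dots> = collision_jacobian DIM('a) m m1 m'"
    using XY by (simp add: collision_jacobian_def powr_divide X_def[symmetric] Y_def[symmetric])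
  finally have jacobian: "1 / \<bar>a + b\<bar> ^ DIM('a) = collision_jacobian DIM('a) m m1 m'" .
  have centre: "(1 / real (m + m1)) *\<^sub>R (real m *\<^sub>R v + real m1 *\<^sub>R v1)
      = v - (real m1 / real (m + m1)) *\<^sub>R (v - v1)" for v v1 :: 'a
    using centre_of_mass_eq[of "real m" "real m1" v v1] pos unfolding of_nat_add by simp
  have "(\<lambda>(v, v1). (post_v m m1 m' v v1 \<omega>, post_v1 m m1 m' v v1 \<omega>))
      = (\<lambda>(v, v1). (v - (real m1 / real (m + m1)) *\<^sub>R (v - v1) + a *\<^sub>R reflection \<omega> (v - v1),
                    v - (real m1 / real (m + m1)) *\<^sub>R (v - v1) - b *\<^sub>R reflection \<omega> (v - v1)))"
    unfolding post_v_eq post_v1_eq centre a_def b_def ..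
  moreover have "a + b \<noteq> 0"
    using XY by (simp add: ab)
  ultimately show ?thesis
    using scales_measure_reflect_relative_velocity[OF \<omega>, of a b] by (simp add: jacobian)
qed

lemma scales_measure_pair_fibrewise:
  assumes "pair_sigma_finite M N"
    and T: "(\<lambda>(x, \<omega>). (L \<omega> x, \<sigma> \<omega>)) \<in> M \<Otimes>\<^sub>M N \<rightarrow>\<^sub>M M \<Otimes>\<^sub>M N"
    and \<sigma>: "\<sigma> \<in> N \<rightarrow>\<^sub>M N" "distr N N \<sigma> = N"
    and L: "\<And>\<omega>. \<omega> \<in> space N \<Longrightarrow> scales_measure M c (L \<omega>)"
  shows "scales_measure (M \<Otimes>\<^sub>M N) c (\<lambda>(x, \<omega>). (L \<omega> x, \<sigma> \<omega>))"
proof -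
  interpret pair_sigma_finite M N by fact
  let ?T = "\<lambda>(x, \<omega>). (L \<omega> x, \<sigma> \<omega>)"
  have "emeasure (M \<Otimes>\<^sub>M N) (?T -` X \<inter> space (M \<Otimes>\<^sub>M N)) = c * emeasure (M \<Otimes>\<^sub>M N) X"
    if X: "X \<in> sets (M \<Otimes>\<^sub>M N)" for X
  proof -
    have TX: "?T -` X \<inter> space (M \<Otimes>\<^sub>M N) \<in> sets (M \<Otimes>\<^sub>M N)"
      using T X by (rule measurable_sets)
    have fibre: "(\<lambda>x. (x, \<omega>)) -` (?T -` X \<inter> space (M \<Otimes>\<^sub>M N)) = L \<omega> -` ((\<lambda>x. (x, \<sigma> \<omega>)) -` X) \<inter> space M"
      if "\<omega> \<in> space N" for \<omega>
      using that by (auto simp: space_pair_measure)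
    have fibre_meas: "(\<lambda>\<omega>. emeasure M ((\<lambda>x. (x, \<omega>)) -` X)) \<in> borel_measurable N"
      by (rule measurable_emeasure_Pair2[OF X])
    have "emeasure (M \<Otimes>\<^sub>M N) (?T -` X \<inter> space (M \<Otimes>\<^sub>M N))
        = (\<integral>\<^sup>+\<omega>. emeasure M ((\<lambda>x. (x, \<omega>)) -` (?T -` X \<inter> space (M \<Otimes>\<^sub>M N))) \<partial>N)"
      by (rule emeasure_pair_measure_alt2[OF TX])
    also have "\<dots> = (\<integral>\<^sup>+\<omega>. c * emeasure M ((\<lambda>x. (x, \<sigma> \<omega>)) -` X) \<partial>N)"
    proof (rule nn_integral_cong)
      fix \<omega>
      assume \<omega>: "\<omega> \<in> space N"
      have "(\<lambda>x. (x, \<sigma> \<omega>)) -` X \<in> sets M"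
        by (rule sets_Pair2[OF X])
      then show "emeasure M ((\<lambda>x. (x, \<omega>)) -` (?T -` X \<inter> space (M \<Otimes>\<^sub>M N)))
          = c * emeasure M ((\<lambda>x. (x, \<sigma> \<omega>)) -` X)"
        using L[OF \<omega>] unfolding fibre[OF \<omega>] scales_measure_def by blast
    qed
    also have "\<dots> = c * (\<integral>\<^sup>+\<omega>. emeasure M ((\<lambda>x. (x, \<sigma> \<omega>)) -` X) \<partial>N)"
      by (rule nn_integral_cmult) (rule measurable_compose[OF \<sigma>(1) fibre_meas])
    also have "(\<integral>\<^sup>+\<omega>. emeasure M ((\<lambda>x. (x, \<sigma> \<omega>)) -` X) \<partial>N)
        = (\<integral>\<^sup>+\<omega>. emeasure M ((\<lambda>x. (x, \<omega>)) -` X) \<partial>distr N N \<sigma>)"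
      by (rule nn_integral_distr[OF \<sigma>(1), symmetric]) (simp add: \<sigma>(2) fibre_meas)
    also have "\<dots> = emeasure (M \<Otimes>\<^sub>M N) X"
      unfolding \<sigma>(2) by (rule emeasure_pair_measure_alt2[OF X, symmetric])
    finally show ?thesis .
  qed
  then show ?thesis
    using T unfolding scales_measure_def by blast
qed

lemma measurable_collision_map:
  "collision_map m m1 m' \<in> coll_space \<rightarrow>\<^sub>M (coll_space :: (('a::euclidean_space \<times> 'a) \<times> 'a) measure)"
proof -
  let ?M = "(lborel \<Otimes>\<^sub>M lborel) \<Otimes>\<^sub>M (sphere_measure :: 'a measure)"
  have [measurable]: "(\<lambda>x. snd x) \<in> ?M \<rightarrow>\<^sub>M (borel :: 'a measure)"
    by (rule measurable_compose[OF measurable_snd measurable_sphere_measure_borel])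
  have "(\<lambda>x. (post_v m m1 m' (fst (fst x)) (snd (fst x)) (snd x),
             post_v1 m m1 m' (fst (fst x)) (snd (fst x)) (snd x))) \<in> ?M \<rightarrow>\<^sub>M lborel \<Otimes>\<^sub>M lborel"
    unfolding post_v_def post_v1_def by measurable
  moreover have "(\<lambda>x. - snd x) \<in> ?M \<rightarrow>\<^sub>M sphere_measure"
    by (rule measurable_compose[OF measurable_snd measurable_uminus_sphere_measure])
  ultimately have "(\<lambda>x. ((post_v m m1 m' (fst (fst x)) (snd (fst x)) (snd x),
                         post_v1 m m1 m' (fst (fst x)) (snd (fst x)) (snd x)), - snd x))
      \<in> ?M \<rightarrow>\<^sub>M (lborel \<Otimes>\<^sub>M lborel) \<Otimes>\<^sub>M sphere_measure"
    by (rule measurable_Pair)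
  then show ?thesis
    unfolding collision_map_def coll_space_def by (simp add: split_beta')
qed

lemma scales_measure_collision_map:
  assumes "(m, m1, m') \<in> triples"
  shows "scales_measure coll_space (ennreal (collision_jacobian DIM('a) m m1 m'))
    (collision_map m m1 m' :: ('a::euclidean_space \<times> 'a) \<times> 'a \<Rightarrow> _)"
proof -
  let ?L = "\<lambda>\<omega> (v :: 'a, v1). (post_v m m1 m' v v1 \<omega>, post_v1 m m1 m' v v1 \<omega>)"
  have map_eq: "collision_map m m1 m' = (\<lambda>(x, \<omega>). (?L \<omega> x, - \<omega>))"
    by (auto simp: collision_map_def fun_eq_iff)
  have "scales_measure (lborel \<Otimes>\<^sub>M sphere_measure) (ennreal (collision_jacobian DIM('a) m m1 m'))
      (\<lambda>(x, \<omega>). (?L \<omega> x, - \<omega>))"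
  proof (rule scales_measure_pair_fibrewise)
    show "pair_sigma_finite lborel (sphere_measure :: 'a measure)"
      by (rule pair_sigma_finite_lborel_sphere_measure)
    show "(\<lambda>(x, \<omega>). (?L \<omega> x, - \<omega>)) \<in> lborel \<Otimes>\<^sub>M sphere_measure \<rightarrow>\<^sub>M lborel \<Otimes>\<^sub>M sphere_measure"
      using measurable_collision_map[of m m1 m', where 'a='a]
      unfolding map_eq coll_space_eq_lborel_sphere_measure .
  qed (use assms in \<open>simp_all add: measurable_uminus_sphere_measure distr_uminus_sphere_measure
                      space_sphere_measure scales_measure_post_velocities\<close>)
  then show ?thesis
    unfolding map_eq coll_space_eq_lborel_sphere_measure .
qed


section \<open>Gain and loss integrals\<close>

definition weak_integrand ::
  "(real \<Rightarrow> real \<Rightarrow> real) \<Rightarrow> (nat \<Rightarrow> 'a::real_inner \<Rightarrow> real) \<Rightarrow> (nat \<Rightarrow> 'a \<Rightarrow> real) \<Rightarrow>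
   nat \<Rightarrow> nat \<Rightarrow> nat \<Rightarrow> ('a \<times> 'a) \<times> 'a \<Rightarrow> real" where
  "weak_integrand B f \<phi> m m1 m' =
     (\<lambda>((v, v1), \<omega>). Bker B m m1 v v1 \<omega> * dphi \<phi> m m1 m' v v1 \<omega> * f m v * f m1 v1)"

definition gain_integrand ::
  "(real \<Rightarrow> real \<Rightarrow> real) \<Rightarrow> (nat \<Rightarrow> 'a::real_inner \<Rightarrow> real) \<Rightarrow> (nat \<Rightarrow> 'a \<Rightarrow> real) \<Rightarrow>
   nat \<Rightarrow> nat \<Rightarrow> nat \<Rightarrow> ('a \<times> 'a) \<times> 'a \<Rightarrow> real" where
  "gain_integrand B f \<phi> m m1 m' =
     (\<lambda>((v, v1), \<omega>). Bker B m m1 v v1 \<omega> * dphi \<phi> m m1 m' v v1 \<omega> *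
        f m' (post_v m m1 m' v v1 \<omega>) * f (m + m1 - m') (post_v1 m m1 m' v v1 \<omega>))"

lemma gain_integrand_eq_weak_integrand_reverse:
  assumes t: "(m, m1, m') \<in> triples" and x: "x \<in> space (coll_space :: (('a::euclidean_space \<times> 'a) \<times> 'a) measure)"
  shows "indicator coll_dom x *\<^sub>R gain_integrand B f \<phi> m m1 m' x
    = - (indicator coll_dom (collision_map m m1 m' x) *\<^sub>R
         weak_integrand B f \<phi> m' (m + m1 - m') m (collision_map m m1 m' x))"
proof -
  obtain v v1 \<omega> where x_eq: "x = ((v, v1), \<omega>)"
    by (metis prod.collapse)
  have \<omega>: "norm \<omega> = 1"
    using x by (simp add: x_eq coll_space_def space_pair_measure space_sphere_measure)
  have masses: "m' + (m + m1 - m') - m = m1"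
    using t by (auto simp: triples_def)
  have "dphi \<phi> m' (m + m1 - m') m (post_v m m1 m' v v1 \<omega>) (post_v1 m m1 m' v v1 \<omega>) (- \<omega>)
      = - dphi \<phi> m m1 m' v v1 \<omega>"
    unfolding dphi_def post_v_reverse[OF t \<omega>] masses by simp
  then show ?thesis
    using coll_dom_reverse[OF t \<omega>, of v v1] Bker_reverse[OF t \<omega>, of B v v1]
    by (simp add: x_eq collision_map_def weak_integrand_def gain_integrand_def coll_dom_def indicator_def)
qed

lemma
  fixes f \<phi> :: "nat \<Rightarrow> 'a::euclidean_space \<Rightarrow> real"
  assumes t: "(m, m1, m') \<in> triples"
    and W: "set_integrable coll_space coll_dom (weak_integrand B f \<phi> m' (m + m1 - m') m)"
  shows set_integrable_gain_integrand: "set_integrable coll_space coll_dom (gain_integrand B f \<phi> m m1 m')"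
    and set_integral_gain_integrand: "(LINT x : coll_dom | coll_space. gain_integrand B f \<phi> m m1 m' x)
      = - collision_jacobian DIM('a) m m1 m' *
          (LINT x : coll_dom | coll_space. weak_integrand B f \<phi> m' (m + m1 - m') m x)"
proof -
  let ?g = "\<lambda>x. indicator coll_dom x *\<^sub>R weak_integrand B f \<phi> m' (m + m1 - m') m x"
  have g: "integrable coll_space ?g"
    using W unfolding set_integrable_def .
  have jacobian: "0 \<le> collision_jacobian DIM('a) m m1 m'"
    by (simp add: collision_jacobian_def)
  note T = scales_measure_collision_map[OF t, where 'a='a]
  have "set_integrable coll_space coll_dom (gain_integrand B f \<phi> m m1 m') \<longleftrightarrow>
      integrable coll_space (\<lambda>x. - ?g (collision_map m m1 m' x))"
    unfolding set_integrable_def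
    by (rule Bochner_Integration.integrable_cong[OF refl])
      (rule gain_integrand_eq_weak_integrand_reverse[OF t])
  then show "set_integrable coll_space coll_dom (gain_integrand B f \<phi> m m1 m')"
    using integrable_comp_scales_measure[OF T jacobian g] by simp
  have "(LINT x : coll_dom | coll_space. gain_integrand B f \<phi> m m1 m' x)
      = (\<integral>x. - ?g (collision_map m m1 m' x) \<partial>coll_space)"
    unfolding set_lebesgue_integral_def
    by (rule Bochner_Integration.integral_cong[OF refl])
      (rule gain_integrand_eq_weak_integrand_reverse[OF t])
  also have "\<dots> = - collision_jacobian DIM('a) m m1 m' * integral\<^sup>L coll_space ?g"
    using integral_comp_scales_measure[OF T jacobian g] by simp
  finally show "(LINT x : coll_dom | coll_space. gain_integrand B f \<phi> m m1 m' x)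
      = - collision_jacobian DIM('a) m m1 m' *
          (LINT x : coll_dom | coll_space. weak_integrand B f \<phi> m' (m + m1 - m') m x)"
    by (simp add: set_lebesgue_integral_def)
qed

lemma set_integral_gain_minus_loss:
  fixes f \<phi> :: "nat \<Rightarrow> 'a::euclidean_space \<Rightarrow> real"
  assumes t: "(m, m1, m') \<in> triples"
    and W: "set_integrable coll_space coll_dom (weak_integrand B f \<phi> m m1 m')"
    and W_reverse: "set_integrable coll_space coll_dom (weak_integrand B f \<phi> m' (m + m1 - m') m)"
  shows "(LINT x : coll_dom | coll_space.
         (case x of ((v, v1), \<omega>) \<Rightarrow>
            Bker B m m1 v v1 \<omega> * dphi \<phi> m m1 m' v v1 \<omega> *
            (c1 * f m' (post_v m m1 m' v v1 \<omega>) * f (m + m1 - m') (post_v1 m m1 m' v v1 \<omega>)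
             - c2 * f m v * f m1 v1)))
    = - (c1 * collision_jacobian DIM('a) m m1 m') *
          (LINT x : coll_dom | coll_space. weak_integrand B f \<phi> m' (m + m1 - m') m x)
      - c2 * (LINT x : coll_dom | coll_space. weak_integrand B f \<phi> m m1 m' x)"
proof -
  have "(LINT x : coll_dom | coll_space.
         (case x of ((v, v1), \<omega>) \<Rightarrow>
            Bker B m m1 v v1 \<omega> * dphi \<phi> m m1 m' v v1 \<omega> *
            (c1 * f m' (post_v m m1 m' v v1 \<omega>) * f (m + m1 - m') (post_v1 m m1 m' v v1 \<omega>)
             - c2 * f m v * f m1 v1)))
      = (LINT x : coll_dom | coll_space. c1 * gain_integrand B f \<phi> m m1 m' x
                                          - c2 * weak_integrand B f \<phi> m m1 m' x)"
    by (rule arg_cong[where f = "set_lebesgue_integral _ _"])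
      (auto simp: fun_eq_iff gain_integrand_def weak_integrand_def algebra_simps)
  also have "\<dots> = c1 * (LINT x : coll_dom | coll_space. gain_integrand B f \<phi> m m1 m' x)
                  - c2 * (LINT x : coll_dom | coll_space. weak_integrand B f \<phi> m m1 m' x)"
    using set_integrable_gain_integrand[OF t W_reverse] W by (simp add: set_integral_diff)
  finally show ?thesis
    unfolding set_integral_gain_integrand[OF t W_reverse] by simp
qed

lemma symmetrised_term_eq:
  fixes A :: "nat \<Rightarrow> nat \<Rightarrow> nat \<Rightarrow> real" and f \<phi> :: "nat \<Rightarrow> 'a::euclidean_space \<Rightarrow> real"
  assumes t: "(m, m1, m') \<in> triples"
    and W: "set_integrable coll_space coll_dom (weak_integrand B f \<phi> m m1 m')"
    and W_reverse: "set_integrable coll_space coll_dom (weak_integrand B f \<phi> m' (m + m1 - m') m)"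
  shows "(real m * real m1) powr (real DIM('a) / 2) *
      (LINT x : coll_dom | coll_space.
         (case x of ((v, v1), \<omega>) \<Rightarrow>
            Bker B m m1 v v1 \<omega> * dphi \<phi> m m1 m' v v1 \<omega> *
            (A m' (m + m1 - m') m / (real m' * real (m + m1 - m')) powr (real DIM('a) / 2)
               * f m' (post_v m m1 m' v v1 \<omega>) * f (m + m1 - m') (post_v1 m m1 m' v v1 \<omega>)
             - A m m1 m' / (real m * real m1) powr (real DIM('a) / 2) * f m v * f m1 v1)))
    = - (A m' (m + m1 - m') m *
           (LINT x : coll_dom | coll_space. weak_integrand B f \<phi> m' (m + m1 - m') m x)
         + A m m1 m' * (LINT x : coll_dom | coll_space. weak_integrand B f \<phi> m m1 m' x))"
proof -
  let ?e = "real DIM('a) / 2"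
  define P Q where "P = (real m * real m1) powr ?e" and "Q = (real m' * real (m + m1 - m')) powr ?e"
  define W1 W2 where "W1 = (LINT x : coll_dom | coll_space. weak_integrand B f \<phi> m' (m + m1 - m') m x)"
    and "W2 = (LINT x : coll_dom | coll_space. weak_integrand B f \<phi> m m1 m' x)"
  have XY: "0 < real m * real m1" "0 < real m' * real (m + m1 - m')"
    using triples_pos[OF t] by simp_all
  then have PQ: "0 < P" "0 < Q"
    unfolding P_def Q_def by (metis powr_gt_zero less_irrefl)+
  have jacobian: "collision_jacobian DIM('a) m m1 m' = Q / P"
    unfolding P_def Q_def collision_jacobian_def using XY by (simp add: powr_divide)
  have "P * (- (A m' (m + m1 - m') m / Q * collision_jacobian DIM('a) m m1 m') * W1
             - A m m1 m' / P * W2)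
      = - (A m' (m + m1 - m') m * W1 + A m m1 m' * W2)"
    using PQ unfolding jacobian by (simp add: field_simps)
  then show ?thesis
    unfolding set_integral_gain_minus_loss[OF t W W_reverse] P_def[symmetric] Q_def[symmetric]
      W1_def[symmetric] W2_def[symmetric] .
qed


section \<open>Sums over triples of masses\<close>

definition reverse_triple :: "nat \<times> nat \<times> nat \<Rightarrow> nat \<times> nat \<times> nat" where
  "reverse_triple = (\<lambda>(m, m1, m'). (m', m + m1 - m', m))"

lemma bij_betw_reverse_triple: "bij_betw reverse_triple triples triples"
  by (rule bij_betwI[of _ _ _ reverse_triple]) (auto simp: reverse_triple_def triples_def)

lemma infsum_triples:
  fixes F :: "nat \<times> nat \<times> nat \<Rightarrow> 'a::banach"
  assumes "F summable_on triples"
  shows "(\<Sum>\<^sub>\<infinity>(m, m1)\<in>{1..} \<times> {1..}. \<Sum>m' = 1..m + m1 - 1. F (m, m1, m')) = (\<Sum>\<^sub>\<infinity>t\<in>triples. F t)"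
proof -
  define g where "g = (\<lambda>((m::nat, m1::nat), m'::nat). (m, m1, m'))"
  define S where "S = Sigma ({1::nat..} \<times> {1::nat..}) (\<lambda>(m, m1). {1..m + m1 - 1})"
  have bij: "bij_betw g S triples"
    by (rule bij_betwI[of _ _ _ "\<lambda>(m, m1, m'). ((m, m1), m')"]) (auto simp: g_def S_def triples_def)
  have summable: "(\<lambda>x. F (g x)) summable_on S"
    using assms by (simp add: summable_on_reindex_bij_betw[OF bij])
  have "(\<Sum>\<^sub>\<infinity>t\<in>triples. F t) = (\<Sum>\<^sub>\<infinity>x\<in>S. F (g x))"
    by (simp add: infsum_reindex_bij_betw[OF bij])
  also have "\<dots> = (\<Sum>\<^sub>\<infinity>(x, y)\<in>S. (\<lambda>x y. F (g (x, y))) x y)"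
    by (rule infsum_cong) auto
  also have "\<dots> = (\<Sum>\<^sub>\<infinity>x\<in>{1..} \<times> {1..}. \<Sum>\<^sub>\<infinity>y\<in>(\<lambda>(m, m1). {1..m + m1 - 1}) x. F (g (x, y)))"
    unfolding S_def
    by (rule infsum_Sigma'_banach[symmetric]) (use summable in \<open>simp add: S_def case_prod_beta'\<close>)
  also have "\<dots> = (\<Sum>\<^sub>\<infinity>(m, m1)\<in>{1..} \<times> {1..}. \<Sum>m' = 1..m + m1 - 1. F (m, m1, m'))"
    by (rule infsum_cong) (auto simp: g_def)
  finally show ?thesis ..
qed

lemma summable_on_set_integrals:
  fixes g :: "'i \<Rightarrow> 'a \<Rightarrow> real"
  assumes nonneg: "\<And>i. i \<in> I \<Longrightarrow> 0 \<le> c i"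
    and summable: "(\<lambda>i. c i * (LINT x : D | M. \<bar>g i x\<bar>)) summable_on I"
  shows "(\<lambda>i. c i * (LINT x : D | M. g i x)) summable_on I"
proof -
  have "norm (c i * (LINT x : D | M. g i x)) \<le> c i * (LINT x : D | M. \<bar>g i x\<bar>)" if "i \<in> I" for i
  proof -
    have "norm (LINT x : D | M. g i x) \<le> (LINT x : D | M. \<bar>g i x\<bar>)"
      using integral_norm_bound[of M "\<lambda>x. indicator D x *\<^sub>R g i x"]
      by (simp add: set_lebesgue_integral_def abs_mult)
    then show ?thesis
      using nonneg[OF that] by (simp add: abs_mult mult_left_mono)
  qed
  then have "(\<lambda>i. norm (c i * (LINT x : D | M. g i x))) summable_on I"
    by (rule Infinite_Sum.abs_summable_on_comparison_test'[OF summable])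
  then show ?thesis
    by (rule abs_summable_summable)
qed


definition weak_term ::
  "(nat \<Rightarrow> nat \<Rightarrow> nat \<Rightarrow> real) \<Rightarrow> (real \<Rightarrow> real \<Rightarrow> real) \<Rightarrow>
   (nat \<Rightarrow> 'a::euclidean_space \<Rightarrow> real) \<Rightarrow> (nat \<Rightarrow> 'a \<Rightarrow> real) \<Rightarrow> nat \<times> nat \<times> nat \<Rightarrow> real" where
  "weak_term A B f \<phi> =
     (\<lambda>(m, m1, m'). A m m1 m' * (LINT x : coll_dom | coll_space. weak_integrand B f \<phi> m m1 m' x))"

lemma summable_on_weak_term:
  assumes A_nonneg: "\<And>m m1 m'. (m, m1, m') \<in> triples \<Longrightarrow> 0 \<le> A m m1 m'"
    and summable: "(\<lambda>(m, m1, m'). A m m1 m' *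
           (LINT x : coll_dom | coll_space.
              (case x of ((v, v1), \<omega>) \<Rightarrow>
                 \<bar>Bker B m m1 v v1 \<omega> * dphi \<phi> m m1 m' v v1 \<omega> * f m v * f m1 v1\<bar>)))
         summable_on triples"
  shows "weak_term A B f \<phi> summable_on triples"
proof -
  have "(\<lambda>t. (case t of (m, m1, m') \<Rightarrow> A m m1 m') *
      (LINT x : coll_dom | coll_space. (case t of (m, m1, m') \<Rightarrow> weak_integrand B f \<phi> m m1 m') x))
      summable_on triples"
  proof (rule summable_on_set_integrals)
    show "0 \<le> (case t of (m, m1, m') \<Rightarrow> A m m1 m')" if "t \<in> triples" for t
      using that A_nonneg by (cases t rule: prod_cases3) simp
    show "(\<lambda>t. (case t of (m, m1, m') \<Rightarrow> A m m1 m') *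
        (LINT x : coll_dom | coll_space. \<bar>(case t of (m, m1, m') \<Rightarrow> weak_integrand B f \<phi> m m1 m') x\<bar>))
        summable_on triples"
      using summable by (simp add: case_prod_beta' weak_integrand_def)
  qed
  then show ?thesis
    by (simp add: weak_term_def case_prod_beta')
qed

lemma weak_form_eq_infsum_weak_term:
  assumes "weak_term A B f \<phi> summable_on triples"
  shows "weak_form A B f \<phi> = 1/2 * (\<Sum>\<^sub>\<infinity>t\<in>triples. weak_term A B f \<phi> t)"
  unfolding weak_form_def infsum_triples[OF assms, symmetric]
  by (simp add: weak_term_def weak_integrand_def case_prod_beta')

lemma sym_form_eq_infsum_weak_term:
  assumes W: "\<And>m m1 m'. (m, m1, m') \<in> triples \<Longrightarrow>
      set_integrable coll_space coll_dom (weak_integrand B f \<phi> m m1 m')"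
    and summable: "weak_term A B f \<phi> summable_on triples"
  shows "sym_form A B f \<phi> = - 1/4 *
    (\<Sum>\<^sub>\<infinity>t\<in>triples. - (weak_term A B f \<phi> (reverse_triple t) + weak_term A B f \<phi> t))"
proof -
  have "(\<lambda>t. weak_term A B f \<phi> (reverse_triple t)) summable_on triples"
    using summable by (simp add: summable_on_reindex_bij_betw[OF bij_betw_reverse_triple])
  then have terms_summable:
    "(\<lambda>t. - (weak_term A B f \<phi> (reverse_triple t) + weak_term A B f \<phi> t)) summable_on triples"
    using summable by (intro summable_on_uminus[THEN iffD2] summable_on_add)
  show ?thesis
    unfolding infsum_triples[OF terms_summable, symmetric]
    unfolding sym_form_def weak_term_def reverse_triple_def prod.case
    by (intro arg_cong[where f = "\<lambda>x. - 1/4 * x"] infsum_cong; clarify;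
        intro sum.cong refl symmetrised_term_eq W; auto simp: triples_def)
qed


text \<open>Only the nonnegativity of \<open>A\<close> and the integrability and summability hypotheses are
  used: the gain term already carries the coefficient \<open>A\<^sub>m\<^sub>',\<^sub>m\<^sub>'\<^sub>1\<^sub>;\<^sub>m\<close> of the reverse collision,
  so the symmetries of \<open>A\<close> are not needed, and measurability is implied by integrability.\<close>

theorem lemma2p2:
  fixes A :: "nat \<Rightarrow> nat \<Rightarrow> nat \<Rightarrow> real"
    and B :: "real \<Rightarrow> real \<Rightarrow> real"
    and f :: "nat \<Rightarrow> real ^ 'n \<Rightarrow> real"
    and \<phi> :: "nat \<Rightarrow> real ^ 'n \<Rightarrow> real"
  assumes A_nonneg: "\<And>m m1 m'. (m, m1, m') \<in> triples \<Longrightarrow> 0 \<le> A m m1 m'"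
    and A_sym: "\<And>m m1 m'. (m, m1, m') \<in> triples \<Longrightarrow> A m m1 m' = A m1 m m'"
    and A_sym2: "\<And>m m1 m'. (m, m1, m') \<in> triples \<Longrightarrow> A m m1 m' = A m m1 (m + m1 - m')"
    and B_nonneg: "\<And>r s. 0 \<le> r \<Longrightarrow> -1 \<le> s \<Longrightarrow> s \<le> 1 \<Longrightarrow> 0 \<le> B r s"
    and B_meas: "(\<lambda>(r, s). B r s) \<in> borel_measurable borel"
    and f_meas: "\<And>m. f m \<in> borel_measurable borel"
    and \<phi>_meas: "\<And>m. \<phi> m \<in> borel_measurable borel"
    and integrable: "\<And>m m1 m'. (m, m1, m') \<in> triples \<Longrightarrow>
         set_integrable coll_space coll_dom
           (\<lambda>((v, v1), \<omega>). Bker B m m1 v v1 \<omega> * dphi \<phi> m m1 m' v v1 \<omega> * f m v * f m1 v1)"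
    and summable: "(\<lambda>(m, m1, m'). A m m1 m' *
           (LINT x : coll_dom | coll_space.
              (case x of ((v, v1), \<omega>) \<Rightarrow>
                 \<bar>Bker B m m1 v v1 \<omega> * dphi \<phi> m m1 m' v v1 \<omega> * f m v * f m1 v1\<bar>)))
         summable_on triples"
  shows "weak_form A B f \<phi> = sym_form A B f \<phi>"
proof -
  have W: "set_integrable coll_space coll_dom (weak_integrand B f \<phi> m m1 m')"
    if "(m, m1, m') \<in> triples" for m m1 m'
    using integrable[OF that] unfolding weak_integrand_def .
  let ?F = "weak_term A B f \<phi>"
  have F_summable: "?F summable_on triples"
    using A_nonneg summable by (rule summable_on_weak_term)
  have F_reverse_summable: "(\<lambda>t. ?F (reverse_triple t)) summable_on triples"
    using F_summable by (simp add: summable_on_reindex_bij_betw[OF bij_betw_reverse_triple])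
  have "(\<Sum>\<^sub>\<infinity>t\<in>triples. - (?F (reverse_triple t) + ?F t))
      = - ((\<Sum>\<^sub>\<infinity>t\<in>triples. ?F (reverse_triple t)) + (\<Sum>\<^sub>\<infinity>t\<in>triples. ?F t))"
    by (simp only: infsum_uminus infsum_add[OF F_reverse_summable F_summable])
  also have "(\<Sum>\<^sub>\<infinity>t\<in>triples. ?F (reverse_triple t)) = (\<Sum>\<^sub>\<infinity>t\<in>triples. ?F t)"
    by (rule infsum_reindex_bij_betw[OF bij_betw_reverse_triple])
  finally show ?thesis
    using weak_form_eq_infsum_weak_term[OF F_summable] sym_form_eq_infsum_weak_term[OF W F_summable]
    by simp
qed

end
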